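(* Let $\mathbf{X}$ be $(\epsilon,\delta)$-kernel learnable from $\mathbf{Z}$ using $T(\epsilon,\delta)$ samples, and suppose that $0<d_{TV}(\mathbf{X},\mathbf{X}')=\kappa<1$. If $T_0>\max\{T(\epsilon,\delta),C\cdot\frac{\log(1/\delta)}{\epsilon^2}\}$ (for a suitable absolute constant $C$), then $\mathbf{X}'$ is $(2\epsilon+2\kappa,2\delta)$-kernel learnable from $T_0$ samples using $\mathbf{Z}$.
   Context: Let $\mathbf{Y},\mathbf{Z}$ be distributions supported on $\mathbb{Z}$. $\mathbf{Y}$ is $(\epsilon,\delta)$-kernel learnable from $T$ samples using $\mathbf{Z}$ if the following holds: for every $T_1\ge T$, if $\hat Y=\{y_1,\dots,y_{T_1}\}$ is a multiset of $T_1$ i.i.d. samples from $\mathbf{Y}$ and $\mathbf{U}_{\hat Y}$ is the uniform distribution over $\hat Y$, then with probability $1-\delta$ over $\hat Y$ we have $d_{TV}(\mathbf{U}_{\hat Y}+\mathbf{Z},\mathbf{Y})\le\epsilon$ (here $+$ denotes the sum of independent random variables). $d_{TV}$ is total variation distance. *)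

theory Defs
  imports "HOL-Probability.Probability"
begin

definition d_TV :: "'a pmf \<Rightarrow> 'a pmf \<Rightarrow> real" where
  "d_TV p q = (SUP A. \<bar>measure_pmf.prob p A - measure_pmf.prob q A\<bar>)"

definition add_pmf :: "int pmf \<Rightarrow> int pmf \<Rightarrow> int pmf" where
  "add_pmf p q = map_pmf (\<lambda>(a, b). a + b) (pair_pmf p q)"

text \<open>Y is (eps,delta)-kernel learnable from T samples using Z: for every T1 \<ge> T
  (with T1 \<ge> 1 so that the sample multiset is nonempty), with probability at least
  1 - delta over T1 i.i.d. samples ys from Y, the uniform distribution on the
  multiset of samples plus an independent Z is eps-close to Y in TV distance.\<close>
definition kernel_learnable :: "int pmf \<Rightarrow> int pmf \<Rightarrow> real \<Rightarrow> real \<Rightarrow> nat \<Rightarrow> bool" where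
  "kernel_learnable Y Z eps delta T \<longleftrightarrow>
     (\<forall>T1. T1 \<ge> T \<and> T1 \<ge> 1 \<longrightarrow>
        measure_pmf.prob (replicate_pmf T1 Y)
          {ys. d_TV (add_pmf (pmf_of_multiset (mset ys)) Z) Y \<le> eps} \<ge> 1 - delta)"

end

theory Submission
  imports Defs
begin

text \<open>Draw the samples as i.i.d. pairs from a maximal coupling \<open>J\<close> of \<open>X\<close> and \<open>X'\<close>, whose
  coordinates disagree with probability \<open>\<kappa> = d_TV X X'\<close>. The first coordinates form a sample
  of \<open>X\<close>, which is good with probability \<open>1 - \<delta>\<close>; by Hoeffding's inequality the fraction of
  disagreeing pairs is below \<open>\<kappa> + \<epsilon>\<close> with probability \<open>1 - \<delta>\<close> as soon as
  \<open>exp (-2 T\<^sub>0 \<epsilon>\<^sup>2) \<le> \<delta>\<close>. Pairing the two empirical distributions index by index couples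
  their convolutions with \<open>Z\<close> so that they differ at most with that fraction, and the
  triangle inequality through \<open>X\<close> gives the bound \<open>2\<epsilon> + 2\<kappa>\<close> for the sample of \<open>X'\<close>.\<close>

text \<open>\<open>HOL-Analysis\<close> has two notions \<open>abs_summable_on\<close>; the PMF library uses the older one.\<close>
no_notation Infinite_Sum.abs_summable_on (infixr \<open>abs'_summable'_on\<close> 46)

abbreviation empirical_pmf :: "'a list \<Rightarrow> 'a pmf" where
  "empirical_pmf xs \<equiv> pmf_of_multiset (mset xs)"

lemma prob_diff_le_d_TV: "\<bar>measure_pmf.prob p A - measure_pmf.prob q A\<bar> \<le> d_TV p q"
proof -
  have "bdd_above (range (\<lambda>A. \<bar>measure_pmf.prob p A - measure_pmf.prob q A\<bar>))"
  proof (rule bdd_aboveI[where M = 1], clarify)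
    fix B
    have "measure_pmf.prob p B \<le> 1" "measure_pmf.prob q B \<le> 1"
      "0 \<le> measure_pmf.prob p B" "0 \<le> measure_pmf.prob q B"
      by simp_all
    then show "\<bar>measure_pmf.prob p B - measure_pmf.prob q B\<bar> \<le> 1"
      by linarith
  qed
  then show ?thesis
    unfolding d_TV_def by (rule cSUP_upper[rotated]) simp
qed

lemma d_TV_leI: "(\<And>A. \<bar>measure_pmf.prob p A - measure_pmf.prob q A\<bar> \<le> c) \<Longrightarrow> d_TV p q \<le> c"
  unfolding d_TV_def by (rule cSUP_least) auto

lemma d_TV_commute: "d_TV p q = d_TV q p"
  unfolding d_TV_def by (simp add: abs_minus_commute)

lemma d_TV_triangle: "d_TV p r \<le> d_TV p q + d_TV q r"
proof (rule d_TV_leI)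
  fix A
  have "\<bar>measure_pmf.prob p A - measure_pmf.prob r A\<bar>
      \<le> \<bar>measure_pmf.prob p A - measure_pmf.prob q A\<bar> + \<bar>measure_pmf.prob q A - measure_pmf.prob r A\<bar>"
    by linarith
  also have "\<dots> \<le> d_TV p q + d_TV q r"
    by (intro add_mono prob_diff_le_d_TV)
  finally show "\<bar>measure_pmf.prob p A - measure_pmf.prob r A\<bar> \<le> d_TV p q + d_TV q r" .
qed

lemma d_TV_le_prob_coupling:
  assumes "map_pmf fst J = p" "map_pmf snd J = q"
  shows "d_TV p q \<le> measure_pmf.prob J {z. fst z \<noteq> snd z}"
proof (rule d_TV_leI)
  fix A
  let ?D = "{z. fst z \<noteq> snd z}"
  have "measure_pmf.prob J (fst -` A) \<le> measure_pmf.prob J (snd -` A \<union> ?D)"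
       "measure_pmf.prob J (snd -` A) \<le> measure_pmf.prob J (fst -` A \<union> ?D)"
    by (auto intro!: measure_pmf.finite_measure_mono)
  moreover have "measure_pmf.prob J (snd -` A \<union> ?D) \<le> measure_pmf.prob J (snd -` A) + measure_pmf.prob J ?D"
       "measure_pmf.prob J (fst -` A \<union> ?D) \<le> measure_pmf.prob J (fst -` A) + measure_pmf.prob J ?D"
    by (auto intro!: measure_Un_le)
  ultimately show "\<bar>measure_pmf.prob p A - measure_pmf.prob q A\<bar> \<le> measure_pmf.prob J ?D"
    unfolding assms[symmetric] measure_map_pmf by linarith
qed

text \<open>If the sum is \<open>0\<close>, \<open>embed_pmf\<close> is applied to a function that is not a distribution
  and returns junk, but the factor \<open>0\<close> makes the identity hold anyway; this spares the
  degenerate cases \<open>p = q\<close> and disjoint supports in the coupling below.\<close>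
lemma pmf_embed_pmf_normalize:
  fixes f :: "'a \<Rightarrow> real"
  assumes nonneg: "\<And>x. 0 \<le> f x" and summable: "f abs_summable_on UNIV"
  shows "infsetsum f UNIV * pmf (embed_pmf (\<lambda>x. f x / infsetsum f UNIV)) x = f x"
proof (cases "infsetsum f UNIV = 0")
  case True
  have "f x \<le> infsetsum f UNIV"
    using infsetsum_mono_neutral_left[OF _ summable, where A = "{x}"] nonneg by auto
  with True nonneg[of x] show ?thesis by simp
next
  case False
  then have pos: "0 < infsetsum f UNIV"
    using infsetsum_nonneg[of UNIV f] nonneg by fastforce
  have "pmf (embed_pmf (\<lambda>x. f x / infsetsum f UNIV)) x = f x / infsetsum f UNIV"
  proof (rule pmf_embed_pmf)
    show "0 \<le> f x / infsetsum f UNIV" for x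
      using nonneg pos by simp
    have "(\<integral>\<^sup>+x. ennreal (f x / infsetsum f UNIV) \<partial>count_space UNIV)
        = ennreal (infsetsum (\<lambda>x. f x / infsetsum f UNIV) UNIV)"
      using summable nonneg pos by (intro nn_integral_conv_infsetsum) (auto simp: divide_inverse)
    also have "\<dots> = 1"
      using pos by (simp add: infsetsum_cdiv summable)
    finally show "(\<integral>\<^sup>+x. ennreal (f x / infsetsum f UNIV) \<partial>count_space UNIV) = 1" .
  qed
  then show ?thesis
    using pos by simp
qed

lemma ex_maximal_coupling:
  fixes p q :: "'a pmf"
  obtains J where "map_pmf fst J = p" "map_pmf snd J = q"
    "measure_pmf.prob J {z. fst z \<noteq> snd z} \<le> d_TV p q"
proof -
  define m where "m x = min (pmf p x) (pmf q x)" for x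
  define h where "h x = pmf p x - m x" for x
  define g where "g x = pmf q x - m x" for x
  define s where "s = infsetsum m UNIV"
  have m_nonneg: "0 \<le> m x" and h_nonneg: "0 \<le> h x" and g_nonneg: "0 \<le> g x" for x
    by (simp_all add: m_def h_def g_def)
  have m_summable: "m abs_summable_on UNIV"
    by (rule abs_summable_on_comparison_test[OF pmf_abs_summable[of p]]) (simp add: m_def)
  have h_summable: "h abs_summable_on UNIV" and g_summable: "g abs_summable_on UNIV"
    unfolding h_def g_def using m_summable by auto
  have sum_h: "infsetsum h UNIV = 1 - s" and sum_g: "infsetsum g UNIV = 1 - s"
    unfolding h_def g_def s_def using m_summable
    by (simp_all add: infsetsum_diff[OF pmf_abs_summable] infsetsum_pmf_eq_1)
  have s_nonneg: "0 \<le> s" and s_le_1: "s \<le> 1"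
    using infsetsum_nonneg[of UNIV h] infsetsum_nonneg[of UNIV m] h_nonneg m_nonneg sum_h
    by (auto simp: s_def)
  have "1 - s \<le> d_TV p q"
  proof -
    define A where "A = {x. pmf q x < pmf p x}"
    have "1 - s = infsetsum h A"
      unfolding sum_h[symmetric] by (intro infsetsum_cong_neutral) (auto simp: h_def m_def A_def)
    also have "\<dots> = infsetsum (pmf p) A - infsetsum (pmf q) A"
      by (subst infsetsum_diff[symmetric]) (auto simp: h_def m_def A_def intro!: infsetsum_cong)
    also have "\<dots> = measure_pmf.prob p A - measure_pmf.prob q A"
      by (simp add: measure_pmf_conv_infsetsum)
    also have "\<dots> \<le> d_TV p q"
      using prob_diff_le_d_TV[of p A q] by linarith
    finally show ?thesis .
  qed
  define M where "M = embed_pmf (\<lambda>x. m x / infsetsum m UNIV)"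
  define H where "H = embed_pmf (\<lambda>x. h x / infsetsum h UNIV)"
  define G where "G = embed_pmf (\<lambda>x. g x / infsetsum g UNIV)"
  have pmf_M: "s * pmf M x = m x" for x
    unfolding M_def s_def by (rule pmf_embed_pmf_normalize[OF m_nonneg m_summable])
  have pmf_H: "(1 - s) * pmf H x = h x" for x
    unfolding H_def sum_h[symmetric] by (rule pmf_embed_pmf_normalize[OF h_nonneg h_summable])
  have pmf_G: "(1 - s) * pmf G x = g x" for x
    unfolding G_def sum_g[symmetric] by (rule pmf_embed_pmf_normalize[OF g_nonneg g_summable])
  define J where
    "J = bind_pmf (bernoulli_pmf s) (\<lambda>b. if b then map_pmf (\<lambda>x. (x, x)) M else pair_pmf H G)"
  have "map_pmf fst J = p"
  proof (rule pmf_eqI)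
    fix x
    have "pmf (map_pmf fst J) x = s * pmf M x + (1 - s) * pmf H x"
      unfolding J_def map_bind_pmf pmf_bind using s_nonneg s_le_1
      by (simp add: map_pmf_comp map_fst_pair_pmf)
    then show "pmf (map_pmf fst J) x = pmf p x"
      by (simp add: pmf_M pmf_H h_def)
  qed
  moreover have "map_pmf snd J = q"
  proof (rule pmf_eqI)
    fix x
    have "pmf (map_pmf snd J) x = s * pmf M x + (1 - s) * pmf G x"
      unfolding J_def map_bind_pmf pmf_bind using s_nonneg s_le_1
      by (simp add: map_pmf_comp map_snd_pair_pmf)
    then show "pmf (map_pmf snd J) x = pmf q x"
      by (simp add: pmf_M pmf_G g_def)
  qed
  moreover have "measure_pmf.prob J {z. fst z \<noteq> snd z} \<le> 1 - s"
  proof -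
    have "emeasure J {z. fst z \<noteq> snd z}
        = emeasure (pair_pmf H G) {z. fst z \<noteq> snd z} * ennreal (1 - s)"
      unfolding J_def emeasure_bind_pmf using s_nonneg s_le_1 by (simp add: emeasure_map_pmf)
    also have "\<dots> \<le> ennreal (1 - s)"
      by (simp add: mult.commute mult_left_le measure_pmf.emeasure_le_1)
    finally show ?thesis
      using s_le_1 by (simp add: measure_pmf.emeasure_eq_measure)
  qed
  ultimately show ?thesis
    using \<open>1 - s \<le> d_TV p q\<close> by (intro that) auto
qed

lemma replicate_pmf_map_pmf: "replicate_pmf n (map_pmf f p) = map_pmf (map f) (replicate_pmf n p)"
  by (induction n) (simp_all add: map_pmf_def bind_assoc_pmf bind_return_pmf)

lemma empirical_pmf_conv_nth:
  assumes "xs \<noteq> []"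
  shows "empirical_pmf xs = map_pmf ((!) xs) (pmf_of_set {..<length xs})"
proof -
  have "map_pmf ((!) xs) (pmf_of_set {..<length xs})
      = pmf_of_multiset (image_mset ((!) xs) (mset_set {..<length xs}))"
    using assms by (intro map_pmf_of_set) auto
  also have "image_mset ((!) xs) (mset_set {..<length xs}) = mset xs"
    by (metis mset_set_upto_eq_mset_upto mset_map map_nth)
  finally show ?thesis by simp
qed

lemma d_TV_add_pmf_empirical_le:
  fixes zs :: "(int \<times> int) list"
  assumes "zs \<noteq> []"
  shows "d_TV (add_pmf (empirical_pmf (map fst zs)) Z) (add_pmf (empirical_pmf (map snd zs)) Z)
           \<le> length (filter (\<lambda>z. fst z \<noteq> snd z) zs) / length zs"
proof -
  have nonempty: "map fst zs \<noteq> []" "map snd zs \<noteq> []"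
    using assms by simp_all
  define I where "I = pmf_of_set {..<length zs}"
  define K where "K = map_pmf (\<lambda>(i, z). (fst (zs ! i) + z, snd (zs ! i) + z)) (pair_pmf I Z)"
  have "map_pmf fst K = add_pmf (empirical_pmf (map fst zs)) Z"
    unfolding K_def I_def add_pmf_def empirical_pmf_conv_nth[OF nonempty(1)] pair_map_pmf1 map_pmf_comp
    using assms by (intro map_pmf_cong) (auto simp: lessThan_empty_iff)
  moreover have "map_pmf snd K = add_pmf (empirical_pmf (map snd zs)) Z"
    unfolding K_def I_def add_pmf_def empirical_pmf_conv_nth[OF nonempty(2)] pair_map_pmf1 map_pmf_comp
    using assms by (intro map_pmf_cong) (auto simp: lessThan_empty_iff)
  ultimately have "d_TV (add_pmf (empirical_pmf (map fst zs)) Z) (add_pmf (empirical_pmf (map snd zs)) Z)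
      \<le> measure_pmf.prob K {z. fst z \<noteq> snd z}"
    by (intro d_TV_le_prob_coupling)
  also have "\<dots> = measure_pmf.prob (pair_pmf I Z) (fst -` {i. fst (zs ! i) \<noteq> snd (zs ! i)})"
    unfolding K_def measure_map_pmf by (intro arg_cong[where f = "measure_pmf.prob (pair_pmf I Z)"]) auto
  also have "\<dots> = measure_pmf.prob I {i. fst (zs ! i) \<noteq> snd (zs ! i)}"
    by (metis measure_map_pmf map_fst_pair_pmf)
  also have "\<dots> = length (filter (\<lambda>z. fst z \<noteq> snd z) zs) / length zs"
    using assms unfolding I_def length_filter_conv_card
    by (subst measure_pmf_of_set) (auto intro!: arg_cong[where f = card])
  finally show ?thesis .
qed

lemma map_pmf_eq_bernoulli_pmf: "map_pmf P p = bernoulli_pmf (measure_pmf.prob p {x. P x})"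
proof (rule pmf_eqI)
  fix b
  have "pmf (map_pmf P p) True = measure_pmf.prob p {x. P x}"
    by (simp add: pmf_map vimage_def)
  then show "pmf (map_pmf P p) b = pmf (bernoulli_pmf (measure_pmf.prob p {x. P x})) b"
    by (cases b) (simp_all add: pmf_False_conv_True[of "map_pmf P p"])
qed

lemma prob_replicate_pmf_frequency_ge:
  assumes "0 < n" "0 \<le> eps"
  shows "measure_pmf.prob (replicate_pmf n p)
           {xs. measure_pmf.prob p {x. P x} + eps \<le> length (filter P xs) / n}
         \<le> exp (- 2 * real n * eps\<^sup>2)"
proof -
  define r where "r = measure_pmf.prob p {x. P x}"
  have "measure_pmf.prob (replicate_pmf n p) {xs. r + eps \<le> length (filter P xs) / n}
      = measure_pmf.prob (replicate_pmf n (bernoulli_pmf r)) {bs. r + eps \<le> length (filter id bs) / n}"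
    unfolding r_def map_pmf_eq_bernoulli_pmf[symmetric] replicate_pmf_map_pmf measure_map_pmf
    by (simp add: vimage_def filter_map comp_def)
  also have "\<dots> = measure_pmf.prob (binomial_pmf n r) {k. r + eps \<le> k / n}"
    by (simp add: binomial_pmf_altdef r_def measure_map_pmf vimage_def)
  also have "\<dots> \<le> exp (-2 * n * eps\<^sup>2)"
    using assms by (intro binomial_distribution.prob_ge') (auto simp: binomial_distribution_def r_def)
  finally show ?thesis
    by (simp add: r_def)
qed

lemma prob_le_add_prob_AE:
  assumes "AE x in measure_pmf M. x \<in> A \<longrightarrow> x \<notin> B \<longrightarrow> x \<in> C"
  shows "measure_pmf.prob M A \<le> measure_pmf.prob M C + measure_pmf.prob M B"
proof -
  have "measure_pmf.prob M A \<le> measure_pmf.prob M (C \<union> B)"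
    using assms by (intro measure_pmf.finite_measure_mono_AE) auto
  also have "\<dots> \<le> measure_pmf.prob M C + measure_pmf.prob M B"
    by (rule measure_Un_le) auto
  finally show ?thesis .
qed

lemma kernel_learnable_transfer:
  fixes X X' Z :: "int pmf"
  assumes learnable: "kernel_learnable X Z eps delta T"
    and "T \<le> T0" "0 \<le> eps"
    and sample_size: "exp (- 2 * real T0 * eps\<^sup>2) \<le> delta"
  shows "kernel_learnable X' Z (2 * eps + 2 * d_TV X X') (2 * delta) T0"
  unfolding kernel_learnable_def
proof (intro allI impI)
  fix n :: nat
  assume n: "T0 \<le> n \<and> 1 \<le> n"
  obtain J where fst_J: "map_pmf fst J = X" and snd_J: "map_pmf snd J = X'"
    and mismatch: "measure_pmf.prob J {z. fst z \<noteq> snd z} \<le> d_TV X X'"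
    by (rule ex_maximal_coupling)
  define R where "R = replicate_pmf n J"
  define good :: "(int \<times> int) list set" where
    "good = {zs. d_TV (add_pmf (empirical_pmf (map fst zs)) Z) X \<le> eps}"
  define bad :: "(int \<times> int) list set" where
    "bad = {zs. measure_pmf.prob J {z. fst z \<noteq> snd z} + eps
                  \<le> length (filter (\<lambda>z. fst z \<noteq> snd z) zs) / n}"
  define target where
    "target = {ys. d_TV (add_pmf (empirical_pmf ys) Z) X' \<le> 2 * eps + 2 * d_TV X X'}"
  have prob_good: "1 - delta \<le> measure_pmf.prob R good"
  proof -
    have "measure_pmf.prob R good
        = measure_pmf.prob (replicate_pmf n X) {ys. d_TV (add_pmf (empirical_pmf ys) Z) X \<le> eps}"
      unfolding R_def good_def fst_J[symmetric] replicate_pmf_map_pmf measure_map_pmf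
      by (simp add: vimage_def)
    then show ?thesis
      using learnable n \<open>T \<le> T0\<close> unfolding kernel_learnable_def by auto
  qed
  have prob_bad: "measure_pmf.prob R bad \<le> delta"
  proof -
    have "measure_pmf.prob R bad \<le> exp (- 2 * real n * eps\<^sup>2)"
      unfolding R_def bad_def using n \<open>0 \<le> eps\<close> by (intro prob_replicate_pmf_frequency_ge) auto
    also have "\<dots> \<le> exp (- 2 * real T0 * eps\<^sup>2)"
      using n by (simp add: mult_right_mono)
    finally show ?thesis
      using sample_size by linarith
  qed
  have transfer: "AE zs in R. zs \<in> good \<longrightarrow> zs \<notin> bad \<longrightarrow> zs \<in> map snd -` target"
    unfolding AE_measure_pmf_iff
  proof (intro ballI impI)
    fix zs
    assume "zs \<in> set_pmf R" "zs \<in> good" "zs \<notin> bad"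
    then have "length zs = n" "zs \<noteq> []"
      and good: "d_TV (add_pmf (empirical_pmf (map fst zs)) Z) X \<le> eps"
      and not_bad: "length (filter (\<lambda>z. fst z \<noteq> snd z) zs) / n
                      < measure_pmf.prob J {z. fst z \<noteq> snd z} + eps"
      using n by (auto simp: R_def set_replicate_pmf good_def bad_def)
    have "d_TV (add_pmf (empirical_pmf (map snd zs)) Z) X'
        \<le> d_TV (add_pmf (empirical_pmf (map snd zs)) Z) (add_pmf (empirical_pmf (map fst zs)) Z)
          + (d_TV (add_pmf (empirical_pmf (map fst zs)) Z) X + d_TV X X')"
      by (meson add_left_mono d_TV_triangle order_trans)
    also have "\<dots> \<le> length (filter (\<lambda>z. fst z \<noteq> snd z) zs) / n + (eps + d_TV X X')"
      using d_TV_add_pmf_empirical_le[OF \<open>zs \<noteq> []\<close>, of Z] good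
      by (simp add: d_TV_commute \<open>length zs = n\<close>)
    finally show "zs \<in> map snd -` target"
      using not_bad mismatch by (simp add: target_def)
  qed
  have "1 - 2 * delta \<le> measure_pmf.prob R (map snd -` target)"
    using prob_le_add_prob_AE[OF transfer] prob_good prob_bad by linarith
  then show "1 - 2 * delta \<le> measure_pmf.prob (replicate_pmf n X')
      {ys. d_TV (add_pmf (empirical_pmf ys) Z) X' \<le> 2 * eps + 2 * d_TV X X'}"
    unfolding R_def snd_J[symmetric] replicate_pmf_map_pmf measure_map_pmf target_def .
qed

theorem lemma30:
  "\<exists>C::real. C > 0 \<and>
     (\<forall>(X::int pmf) X' Z (eps::real) (delta::real) (T::nat) (T0::nat).
        0 < eps \<longrightarrow> 0 < delta \<longrightarrow> delta < 1 \<longrightarrow>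
        kernel_learnable X Z eps delta T \<longrightarrow>
        0 < d_TV X X' \<longrightarrow> d_TV X X' < 1 \<longrightarrow>
        real T0 > max (real T) (C * ln (1 / delta) / eps\<^sup>2) \<longrightarrow>
        kernel_learnable X' Z (2 * eps + 2 * d_TV X X') (2 * delta) T0)"
proof (intro exI[of _ "1::real"] conjI allI impI)
  fix X X' Z :: "int pmf" and eps delta :: real and T T0 :: nat
  assume eps: "0 < eps" and delta: "0 < delta" "delta < 1"
    and learnable: "kernel_learnable X Z eps delta T"
    and "0 < d_TV X X'" "d_TV X X' < 1"
    and T0: "max (real T) (1 * ln (1 / delta) / eps\<^sup>2) < real T0"
  have "exp (- 2 * real T0 * eps\<^sup>2) \<le> delta"
  proof -
    have "- ln delta < real T0 * eps\<^sup>2"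
      using T0 eps delta by (simp add: ln_div field_simps)
    moreover have "ln delta < 0"
      using delta by simp
    ultimately have "- 2 * real T0 * eps\<^sup>2 \<le> ln delta"
      by linarith
    then show ?thesis
      using delta by (metis exp_le_cancel_iff exp_ln)
  qed
  then show "kernel_learnable X' Z (2 * eps + 2 * d_TV X X') (2 * delta) T0"
    using learnable T0 eps by (intro kernel_learnable_transfer) auto
qed simp

end
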